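(* Let $A\in\mathbb{R}^{n\times n}$ be symmetric positive definite, $B\in\mathbb{R}^{m\times n}$ and $C\in\mathbb{R}^{l\times m}$, and suppose that the matrix $\mathcal{A}$ defined below is singular. Then for every $\alpha>0$ the matrix $\mathcal{T}_\alpha$ defined below satisfies $\operatorname{index}(\mathcal{I}-\mathcal{T}_\alpha)=1$.
   Context: Let $\mathbf{n}=n+m+l$ and $\mathcal{I}$ be the $\mathbf{n}\times\mathbf{n}$ identity. Define $$\mathcal{A}=\begin{pmatrix}A&B^T&0\\-B&0&-C^T\\0&C&0\end{pmatrix},\quad \mathcal{A}_1=\begin{pmatrix}A&B^T&0\\-B&0&0\\0&0&0\end{pmatrix},\quad \mathcal{A}_2=\begin{pmatrix}0&0&0\\0&0&-C^T\\0&C&0\end{pmatrix},$$ so $\mathcal{A}=\mathcal{A}_1+\mathcal{A}_2$. For $\alpha>0$ the APSS iteration matrix is $$\mathcal{T}_\alpha=(\alpha\mathcal{I}+\mathcal{A}_2)^{-1}(\alpha\mathcal{I}-\mathcal{A}_1)(\alpha\mathcal{I}+\mathcal{A}_1)^{-1}(\alpha\mathcal{I}-\mathcal{A}_2).$$ The index of a square matrix $M$ is the smallest nonnegative integer $k$ such that $\operatorname{rank}(M^{k+1})=\operatorname{rank}(M^k)$. *)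

theory Defs
  imports "Jordan_Normal_Form.Matrix" "Jordan_Normal_Form.DL_Rank"
begin

(* horizontal concatenation [X, Y] of two matrices with the same number of rows *)
definition append_cols :: "'a::zero mat \<Rightarrow> 'a mat \<Rightarrow> 'a mat" where
  "append_cols X Y = four_block_mat X Y (0\<^sub>m 0 (dim_col X)) (0\<^sub>m 0 (dim_col Y))"

definition block3 :: "'a::zero mat \<Rightarrow> 'a mat \<Rightarrow> 'a mat \<Rightarrow> 'a mat \<Rightarrow> 'a mat \<Rightarrow> 'a mat
    \<Rightarrow> 'a mat \<Rightarrow> 'a mat \<Rightarrow> 'a mat \<Rightarrow> 'a mat" where
  "block3 A11 A12 A13 A21 A22 A23 A31 A32 A33 =
     four_block_mat (four_block_mat A11 A12 A21 A22) (A13 @\<^sub>r A23) (append_cols A31 A32) A33"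

definition sym_pos_def :: "nat \<Rightarrow> real mat \<Rightarrow> bool" where
  "sym_pos_def n A \<longleftrightarrow> A \<in> carrier_mat n n \<and> transpose_mat A = A \<and>
     (\<forall>x \<in> carrier_vec n. x \<noteq> 0\<^sub>v n \<longrightarrow> x \<bullet> (A *\<^sub>v x) > 0)"

definition mat_inv :: "'a::field mat \<Rightarrow> 'a mat" where
  "mat_inv M = (SOME B. B \<in> carrier_mat (dim_row M) (dim_row M) \<and> inverts_mat M B \<and> inverts_mat B M)"

definition mat_index :: "'a::field mat \<Rightarrow> nat" where
  "mat_index M = (LEAST k. vec_space.rank (dim_row M) (M ^\<^sub>m (k+1))
                          = vec_space.rank (dim_row M) (M ^\<^sub>m k))"

definition calA :: "nat \<Rightarrow> nat \<Rightarrow> nat \<Rightarrow> real mat \<Rightarrow> real mat \<Rightarrow> real mat \<Rightarrow> real mat" where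
  "calA n m l A B C = block3
     A (transpose_mat B) (0\<^sub>m n l)
     (- B) (0\<^sub>m m m) (- transpose_mat C)
     (0\<^sub>m l n) C (0\<^sub>m l l)"

definition calA1 :: "nat \<Rightarrow> nat \<Rightarrow> nat \<Rightarrow> real mat \<Rightarrow> real mat \<Rightarrow> real mat" where
  "calA1 n m l A B = block3
     A (transpose_mat B) (0\<^sub>m n l)
     (- B) (0\<^sub>m m m) (0\<^sub>m m l)
     (0\<^sub>m l n) (0\<^sub>m l m) (0\<^sub>m l l)"

definition calA2 :: "nat \<Rightarrow> nat \<Rightarrow> nat \<Rightarrow> real mat \<Rightarrow> real mat" where
  "calA2 n m l C = block3
     (0\<^sub>m n n) (0\<^sub>m n m) (0\<^sub>m n l)
     (0\<^sub>m m n) (0\<^sub>m m m) (- transpose_mat C)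
     (0\<^sub>m l n) C (0\<^sub>m l l)"

definition T_apss :: "nat \<Rightarrow> nat \<Rightarrow> nat \<Rightarrow> real mat \<Rightarrow> real mat \<Rightarrow> real mat \<Rightarrow> real \<Rightarrow> real mat" where
  "T_apss n m l A B C \<alpha> =
    (let N = n + m + l; I = 1\<^sub>m N; A1 = calA1 n m l A B; A2 = calA2 n m l C in
     mat_inv (\<alpha> \<cdot>\<^sub>m I + A2) * (\<alpha> \<cdot>\<^sub>m I - A1) * mat_inv (\<alpha> \<cdot>\<^sub>m I + A1) * (\<alpha> \<cdot>\<^sub>m I - A2))"

end

theory Submission
  imports Defs
begin

text \<open>
Write \<open>M\<^sub>1 = \<alpha>I + \<A>\<^sub>1\<close> and \<open>M\<^sub>2 = \<alpha>I + \<A>\<^sub>2\<close>. The quadratic form of \<open>\<A>\<^sub>1\<close> is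
\<open>u\<^sup>T A u \<ge> 0\<close> (with \<open>u\<close> the first block of the vector) and \<open>\<A>\<^sub>2\<close> is skew, so both
shifts are invertible, and multiplying out gives \<open>M\<^sub>1 M\<^sub>2 (I - T\<^sub>\<alpha>) = 2\<alpha>\<A>\<close>. Hence
\<open>ker (I - T\<^sub>\<alpha>) = ker \<A>\<close>, which is nontrivial. For \<open>z \<in> ker \<A>\<close> the form of \<open>\<A>\<^sub>1\<close>
vanishes at \<open>z\<close>, which forces \<open>\<A>\<^sub>1\<^sup>T z = -\<A>\<^sub>1 z = \<A>\<^sub>2 z\<close>; thus \<open>\<A>\<^sup>T z = 0\<close> and
\<open>M\<^sub>1\<^sup>T z = M\<^sub>2 z\<close>. If \<open>z = (I - T\<^sub>\<alpha>) x\<close> lies in \<open>ker (I - T\<^sub>\<alpha>)\<close>, then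
\<open>|M\<^sub>2 z|\<^sup>2 = z \<bullet> M\<^sub>1 M\<^sub>2 z = 2\<alpha> z \<bullet> \<A> x = 2\<alpha> (\<A>\<^sup>T z) \<bullet> x = 0\<close>, so \<open>z = 0\<close>. Therefore
\<open>ker (I - T\<^sub>\<alpha>)\<^sup>2 = ker (I - T\<^sub>\<alpha>)\<close>, i.e. the rank stabilises after one step.
\<close>

lemma self_scalar_prod_nonneg: "0 \<le> (x :: real vec) \<bullet> x"
  unfolding scalar_prod_def by (auto intro: sum_nonneg)

lemma self_scalar_prod_eq_0_iff:
  assumes "(x :: real vec) \<in> carrier_vec N"
  shows "x \<bullet> x = 0 \<longleftrightarrow> x = 0\<^sub>v N"
proof
  assume "x \<bullet> x = 0"
  then have "\<forall>i\<in>{0..<dim_vec x}. x $ i * x $ i = 0"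
    unfolding scalar_prod_def by (subst sum_nonneg_eq_0_iff[symmetric]) auto
  then show "x = 0\<^sub>v N" using assms by (intro eq_vecI) auto
qed (use assms in auto)

lemma scalar_prod_skew_eq_0:
  fixes K :: "real mat"
  assumes K: "K \<in> carrier_mat N N" and skew: "transpose_mat K = - K" and x: "x \<in> carrier_vec N"
  shows "x \<bullet> (K *\<^sub>v x) = 0"
proof -
  have "x \<bullet> (K *\<^sub>v x) = (transpose_mat K *\<^sub>v x) \<bullet> x"
    by (rule transpose_vec_mult_scalar[OF K x x, symmetric])
  also have "\<dots> = - (x \<bullet> (K *\<^sub>v x))"
    unfolding skew using K x comm_scalar_prod[of x N "K *\<^sub>v x"] by simp
  finally show ?thesis by simp
qed

lemma mult_mat_zero_vec: "A \<in> carrier_mat nr nc \<Longrightarrow> A *\<^sub>v 0\<^sub>v nc = 0\<^sub>v nr"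
  by auto

lemma smult_vec_eq_0_iff:
  fixes v :: "'a :: field vec"
  assumes "c \<noteq> 0" "v \<in> carrier_vec N"
  shows "c \<cdot>\<^sub>v v = 0\<^sub>v N \<longleftrightarrow> v = 0\<^sub>v N"
proof
  assume zero: "c \<cdot>\<^sub>v v = 0\<^sub>v N"
  show "v = 0\<^sub>v N"
  proof (rule eq_vecI)
    fix i assume "i < dim_vec (0\<^sub>v N)"
    then have "c * v $ i = 0" using arg_cong[OF zero, of "\<lambda>w. w $ i"] assms(2) by simp
    then show "v $ i = 0\<^sub>v N $ i" using assms \<open>i < dim_vec (0\<^sub>v N)\<close> by simp
  qed (use assms in simp)
qed auto

lemma minus_unique_vec:
  fixes v w :: "'a :: ab_group_add vec"
  assumes "v \<in> carrier_vec n" "w \<in> carrier_vec n" "v + w = 0\<^sub>v n"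
  shows "- v = w"
proof (rule eq_vecI)
  fix i assume "i < dim_vec w"
  then show "(- v) $ i = w $ i"
    using arg_cong[OF assms(3), of "\<lambda>u. u $ i"] assms(1,2) by (simp add: minus_unique)
qed (use assms in simp)

lemma smult_mat_mult_mat_vec:
  fixes A :: "'a :: comm_semiring_0 mat"
  assumes "A \<in> carrier_mat nr nc" "v \<in> carrier_vec nc"
  shows "(c \<cdot>\<^sub>m A) *\<^sub>v v = c \<cdot>\<^sub>v (A *\<^sub>v v)"
  using assms by (intro eq_vecI) (auto simp: scalar_prod_def sum_distrib_left mult.assoc)

lemma shift_mult_vec:
  fixes K :: "'a :: comm_ring_1 mat"
  assumes "K \<in> carrier_mat N N" "x \<in> carrier_vec N"
  shows "(c \<cdot>\<^sub>m 1\<^sub>m N + K) *\<^sub>v x = c \<cdot>\<^sub>v x + K *\<^sub>v x"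
    and "(c \<cdot>\<^sub>m 1\<^sub>m N - K) *\<^sub>v x = c \<cdot>\<^sub>v x - K *\<^sub>v x"
  using assms by (simp_all add: add_mult_distrib_mat_vec[of _ N N] minus_mult_distrib_mat_vec[of _ N N]
      smult_mat_mult_mat_vec[of _ N N])

lemma scalar_prod_plus_transpose:
  fixes K :: "'a :: comm_ring_1 mat"
  assumes K: "K \<in> carrier_mat N N" and x: "x \<in> carrier_vec N"
  shows "x \<bullet> ((K + transpose_mat K) *\<^sub>v x) = 2 * (x \<bullet> (K *\<^sub>v x))"
proof -
  have "x \<bullet> (transpose_mat K *\<^sub>v x) = x \<bullet> (K *\<^sub>v x)"
    using transpose_vec_mult_scalar[OF K x x] comm_scalar_prod[of x N "transpose_mat K *\<^sub>v x"] K x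
    by simp
  then show ?thesis
    using K x by (simp add: add_mult_distrib_mat_vec[of _ N N] scalar_prod_add_distrib[of x N])
qed

lemma shift_kernel_trivial:
  fixes K :: "real mat"
  assumes K: "K \<in> carrier_mat N N" and "\<alpha> > 0"
    and form: "\<And>y. y \<in> carrier_vec N \<Longrightarrow> 0 \<le> y \<bullet> (K *\<^sub>v y)"
    and x: "x \<in> carrier_vec N" "(\<alpha> \<cdot>\<^sub>m 1\<^sub>m N + K) *\<^sub>v x = 0\<^sub>v N"
  shows "x = 0\<^sub>v N"
proof -
  have "0 = x \<bullet> ((\<alpha> \<cdot>\<^sub>m 1\<^sub>m N + K) *\<^sub>v x)" using x by simp
  also have "\<dots> = \<alpha> * (x \<bullet> x) + x \<bullet> (K *\<^sub>v x)"
    using K x(1) by (simp add: shift_mult_vec scalar_prod_add_distrib[of x N])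
  finally have "x \<bullet> x \<le> 0"
    using form[OF x(1)] \<open>\<alpha> > 0\<close> by (simp add: add_nonneg_eq_0_iff self_scalar_prod_nonneg)
  then show ?thesis
    using self_scalar_prod_eq_0_iff[OF x(1)] self_scalar_prod_nonneg[of x] by simp
qed

lemma mat_inv_if_kernel_trivial:
  fixes M :: "'a::field mat"
  assumes M: "M \<in> carrier_mat N N"
    and ker: "\<And>x. x \<in> carrier_vec N \<Longrightarrow> M *\<^sub>v x = 0\<^sub>v N \<Longrightarrow> x = 0\<^sub>v N"
  shows "mat_inv M \<in> carrier_mat N N" "M * mat_inv M = 1\<^sub>m N" "mat_inv M * M = 1\<^sub>m N"
proof -
  have "det M \<noteq> 0" using det_0_iff_vec_prod_zero_field[OF M] ker by blast
  from det_non_zero_imp_unit[OF M this, of "()"]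
  have "\<exists>B. B \<in> carrier_mat (dim_row M) (dim_row M) \<and> inverts_mat M B \<and> inverts_mat B M"
    using M unfolding Units_def ring_mat_def inverts_mat_def by auto
  from someI_ex[OF this] show "mat_inv M \<in> carrier_mat N N" "M * mat_inv M = 1\<^sub>m N" "mat_inv M * M = 1\<^sub>m N"
    using M unfolding mat_inv_def inverts_mat_def by auto
qed

lemma not_invertible_mat_kernel:
  fixes M :: "'a::field mat"
  assumes M: "M \<in> carrier_mat N N" and "\<not> invertible_mat M"
  obtains v where "v \<in> carrier_vec N" "v \<noteq> 0\<^sub>v N" "M *\<^sub>v v = 0\<^sub>v N"
proof -
  have "det M = 0"
  proof (rule ccontr)
    assume "det M \<noteq> 0"
    from det_non_zero_imp_unit[OF M this, of "()"] have "invertible_mat M"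
      using M unfolding Units_def ring_mat_def invertible_mat_def inverts_mat_def by auto
    with \<open>\<not> invertible_mat M\<close> show False ..
  qed
  then show ?thesis using that det_0_iff_vec_prod_zero_field[OF M] by blast
qed

lemma (in vec_space) rank_plus_nullity:
  assumes A: "A \<in> carrier_mat n n"
  shows "rank A + vectorspace.dim class_ring (vs {x \<in> carrier_vec n. A *\<^sub>v x = 0\<^sub>v n}) = n"
proof -
  interpret lm: linear_map class_ring V V "(*\<^sub>v) A"
    by unfold_locales
      (use A in \<open>auto simp: LinearCombinations.module_hom_def mult_add_distrib_mat_vec mult_mat_vec\<close>)
  have im: "lm.imT = span (set (cols A))"
    using col_space_eq[OF A] A unfolding col_space_def mod_hom.im_def[OF lm.mod_hom_axioms] by auto
  have ker: "lm.kerT = {x \<in> carrier_vec n. A *\<^sub>v x = 0\<^sub>v n}"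
    unfolding mod_hom.ker_def[OF lm.mod_hom_axioms] by auto
  show ?thesis
    using lm.rank_nullity[OF fin_dim] dim_is_n unfolding im ker rank_def by simp
qed

lemma (in vec_space) rank_mult_self_eq:
  assumes A: "A \<in> carrier_mat n n"
    and ker: "\<And>x. x \<in> carrier_vec n \<Longrightarrow> A *\<^sub>v (A *\<^sub>v x) = 0\<^sub>v n \<Longrightarrow> A *\<^sub>v x = 0\<^sub>v n"
  shows "rank (A * A) = rank A"
proof -
  have "{x \<in> carrier_vec n. (A * A) *\<^sub>v x = 0\<^sub>v n} = {x \<in> carrier_vec n. A *\<^sub>v x = 0\<^sub>v n}"
    using ker A by (auto simp: assoc_mult_mat_vec)
  then show ?thesis using rank_plus_nullity[OF A] rank_plus_nullity[of "A * A"] A by simp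
qed

lemma mat_index_eq_1I:
  fixes M :: "'a::field mat"
  assumes M: "M \<in> carrier_mat N N"
    and singular: "v \<in> carrier_vec N" "v \<noteq> 0\<^sub>v N" "M *\<^sub>v v = 0\<^sub>v N"
    and ker: "\<And>x. x \<in> carrier_vec N \<Longrightarrow> M *\<^sub>v (M *\<^sub>v x) = 0\<^sub>v N \<Longrightarrow> M *\<^sub>v x = 0\<^sub>v N"
  shows "mat_index M = 1"
proof -
  have "det M = 0" using det_0_iff_vec_prod_zero_field[OF M] singular by blast
  then have rank_M: "vec_space.rank N M \<noteq> N" using vec_space.det_rank_iff[OF M] by simp
  have rank_1: "vec_space.rank N (1\<^sub>m N :: 'a mat) = N"
    using vec_space.det_rank_iff[of "1\<^sub>m N :: 'a mat" N] by simp
  have rank_MM: "vec_space.rank N (M * M) = vec_space.rank N M"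
    by (rule vec_space.rank_mult_self_eq[OF M ker])
  have pow: "M ^\<^sub>m 0 = 1\<^sub>m N" "M ^\<^sub>m 1 = M" "M ^\<^sub>m 2 = M * M"
    using M by (auto simp: numeral_2_eq_2)
  have "(LEAST k. vec_space.rank N (M ^\<^sub>m (k+1)) = vec_space.rank N (M ^\<^sub>m k)) = 1"
  proof (rule Least_equality)
    show "vec_space.rank N (M ^\<^sub>m (1+1)) = vec_space.rank N (M ^\<^sub>m 1)"
      using pow rank_MM by (simp add: one_add_one)
    show "1 \<le> k" if "vec_space.rank N (M ^\<^sub>m (k+1)) = vec_space.rank N (M ^\<^sub>m k)" for k
      using that pow rank_M rank_1 by (cases k) auto
  qed
  then show ?thesis using M unfolding mat_index_def by simp
qed

lemma right_inverse_mult_vec: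
  fixes M R :: "'a :: semiring_1 mat"
  assumes "M \<in> carrier_mat N N" "R \<in> carrier_mat N N" "M * R = 1\<^sub>m N" "x \<in> carrier_vec N"
  shows "M *\<^sub>v (R *\<^sub>v x) = x"
  using assms assoc_mult_mat_vec[of M N N R N x] by simp

text \<open>The two hypotheses on \<open>A1\<close> hold whenever its symmetric part is positive semidefinite;
  for \<open>\<A>\<^sub>1\<close> the symmetric part is \<open>diag(2A, 0, 0)\<close>.\<close>

locale apss_splitting =
  fixes N :: nat and A1 A2 :: "real mat" and \<alpha> :: real
  assumes A1_carrier: "A1 \<in> carrier_mat N N" and A2_carrier: "A2 \<in> carrier_mat N N"
    and alpha_pos: "\<alpha> > 0"
    and A1_form_nonneg: "\<And>x. x \<in> carrier_vec N \<Longrightarrow> 0 \<le> x \<bullet> (A1 *\<^sub>v x)"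
    and A1_form_eq_0: "\<And>x. x \<in> carrier_vec N \<Longrightarrow> x \<bullet> (A1 *\<^sub>v x) = 0
      \<Longrightarrow> transpose_mat A1 *\<^sub>v x = - (A1 *\<^sub>v x)"
    and A2_skew: "transpose_mat A2 = - A2"
begin

abbreviation M1 :: "real mat" where "M1 \<equiv> \<alpha> \<cdot>\<^sub>m 1\<^sub>m N + A1"
abbreviation M2 :: "real mat" where "M2 \<equiv> \<alpha> \<cdot>\<^sub>m 1\<^sub>m N + A2"

definition iteration :: "real mat" where
  "iteration = mat_inv M2 * (\<alpha> \<cdot>\<^sub>m 1\<^sub>m N - A1) * mat_inv M1 * (\<alpha> \<cdot>\<^sub>m 1\<^sub>m N - A2)"

lemma shift_carriers:
  "M1 \<in> carrier_mat N N" "M2 \<in> carrier_mat N N"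
  "\<alpha> \<cdot>\<^sub>m 1\<^sub>m N - A1 \<in> carrier_mat N N" "\<alpha> \<cdot>\<^sub>m 1\<^sub>m N - A2 \<in> carrier_mat N N"
  using A1_carrier A2_carrier by auto

lemmas M1_carrier = shift_carriers(1) and M2_carrier = shift_carriers(2)

lemma M1_kernel: "x \<in> carrier_vec N \<Longrightarrow> M1 *\<^sub>v x = 0\<^sub>v N \<Longrightarrow> x = 0\<^sub>v N"
  using shift_kernel_trivial[OF A1_carrier alpha_pos A1_form_nonneg] by blast

lemma M2_kernel: "x \<in> carrier_vec N \<Longrightarrow> M2 *\<^sub>v x = 0\<^sub>v N \<Longrightarrow> x = 0\<^sub>v N"
  using shift_kernel_trivial[OF A2_carrier alpha_pos, of x]
    scalar_prod_skew_eq_0[OF A2_carrier A2_skew] by simp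

lemma M1_inverse: "mat_inv M1 \<in> carrier_mat N N" "M1 * mat_inv M1 = 1\<^sub>m N" "mat_inv M1 * M1 = 1\<^sub>m N"
  using mat_inv_if_kernel_trivial[OF M1_carrier] M1_kernel by blast+

lemma M2_inverse: "mat_inv M2 \<in> carrier_mat N N" "M2 * mat_inv M2 = 1\<^sub>m N" "mat_inv M2 * M2 = 1\<^sub>m N"
  using mat_inv_if_kernel_trivial[OF M2_carrier] M2_kernel by blast+

lemma sum_carrier: "A1 + A2 \<in> carrier_mat N N"
  using A1_carrier A2_carrier by simp

lemma iteration_carrier: "iteration \<in> carrier_mat N N"
  unfolding iteration_def using M1_inverse(1) M2_inverse(1) A1_carrier A2_carrier by auto

lemma one_minus_iteration_carrier: "1\<^sub>m N - iteration \<in> carrier_mat N N"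
  using iteration_carrier by (rule minus_carrier_mat)

lemma shifts_mult_one_minus_iteration:
  assumes x: "x \<in> carrier_vec N"
  shows "M1 *\<^sub>v (M2 *\<^sub>v ((1\<^sub>m N - iteration) *\<^sub>v x)) = (2 * \<alpha>) \<cdot>\<^sub>v ((A1 + A2) *\<^sub>v x)"
proof -
  define p where "p = (\<alpha> \<cdot>\<^sub>m 1\<^sub>m N - A2) *\<^sub>v x"
  define q where "q = mat_inv M1 *\<^sub>v p"
  have p: "p \<in> carrier_vec N" and q: "q \<in> carrier_vec N"
    unfolding p_def q_def using x shift_carriers M1_inverse(1) by auto
  have p_eq: "p = \<alpha> \<cdot>\<^sub>v x - A2 *\<^sub>v x"
    unfolding p_def using A2_carrier x by (rule shift_mult_vec)
  have "M1 *\<^sub>v q = p"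
    unfolding q_def by (rule right_inverse_mult_vec[OF M1_carrier M1_inverse(1,2) p])
  then have M1q: "\<alpha> \<cdot>\<^sub>v q + A1 *\<^sub>v q = p"
    by (simp add: shift_mult_vec(1)[OF A1_carrier q])
  have "iteration *\<^sub>v x = mat_inv M2 *\<^sub>v ((\<alpha> \<cdot>\<^sub>m 1\<^sub>m N - A1) *\<^sub>v q)"
    unfolding iteration_def q_def p_def using M1_inverse(1) M2_inverse(1) shift_carriers x
    by (simp add: assoc_mult_mat_vec[of _ N N _ N])
  then have "M2 *\<^sub>v (iteration *\<^sub>v x) = (\<alpha> \<cdot>\<^sub>m 1\<^sub>m N - A1) *\<^sub>v q"
    using right_inverse_mult_vec[OF M2_carrier M2_inverse(1,2)] shift_carriers(3) q by simp
  then have "M2 *\<^sub>v ((1\<^sub>m N - iteration) *\<^sub>v x) = M2 *\<^sub>v x - (\<alpha> \<cdot>\<^sub>m 1\<^sub>m N - A1) *\<^sub>v q"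
    using x iteration_carrier M2_carrier
    by (simp add: minus_mult_distrib_mat_vec[of _ N N] mult_minus_distrib_mat_vec[of _ N N])
  also have "\<dots> = (2 * \<alpha>) \<cdot>\<^sub>v (x - q)"
  proof (rule eq_vecI)
    fix i assume "i < dim_vec ((2 * \<alpha>) \<cdot>\<^sub>v (x - q))"
    then have i: "i < N" using q by simp
    have "(A1 *\<^sub>v q) $ i = \<alpha> * x $ i - (A2 *\<^sub>v x) $ i - \<alpha> * q $ i"
      using arg_cong[OF M1q, of "\<lambda>v. v $ i"] i x q A1_carrier A2_carrier unfolding p_eq by simp
    then show "(M2 *\<^sub>v x - (\<alpha> \<cdot>\<^sub>m 1\<^sub>m N - A1) *\<^sub>v q) $ i = ((2 * \<alpha>) \<cdot>\<^sub>v (x - q)) $ i"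
      using i x q A1_carrier A2_carrier by (simp add: shift_mult_vec algebra_simps)
  qed (use q A1_carrier in simp)
  finally have "M2 *\<^sub>v ((1\<^sub>m N - iteration) *\<^sub>v x) = (2 * \<alpha>) \<cdot>\<^sub>v (x - q)" .
  then have "M1 *\<^sub>v (M2 *\<^sub>v ((1\<^sub>m N - iteration) *\<^sub>v x)) = (2 * \<alpha>) \<cdot>\<^sub>v (M1 *\<^sub>v x - M1 *\<^sub>v q)"
    using x q M1_carrier by (simp add: mult_mat_vec mult_minus_distrib_mat_vec[of _ N N])
  also have "M1 *\<^sub>v x - M1 *\<^sub>v q = (A1 + A2) *\<^sub>v x"
    unfolding \<open>M1 *\<^sub>v q = p\<close> p_eq using x A1_carrier A2_carrier
    by (intro eq_vecI) (simp_all add: shift_mult_vec add_mult_distrib_mat_vec[of _ N N])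
  finally show ?thesis .
qed

lemma kernel_one_minus_iteration:
  assumes x: "x \<in> carrier_vec N"
  shows "(1\<^sub>m N - iteration) *\<^sub>v x = 0\<^sub>v N \<longleftrightarrow> (A1 + A2) *\<^sub>v x = 0\<^sub>v N"
proof -
  have y: "(1\<^sub>m N - iteration) *\<^sub>v x \<in> carrier_vec N"
    using x one_minus_iteration_carrier by simp
  have M2y: "M2 *\<^sub>v ((1\<^sub>m N - iteration) *\<^sub>v x) \<in> carrier_vec N" using y M2_carrier by simp
  have "(1\<^sub>m N - iteration) *\<^sub>v x = 0\<^sub>v N \<longleftrightarrow> M1 *\<^sub>v (M2 *\<^sub>v ((1\<^sub>m N - iteration) *\<^sub>v x)) = 0\<^sub>v N"
  proof
    assume "M1 *\<^sub>v (M2 *\<^sub>v ((1\<^sub>m N - iteration) *\<^sub>v x)) = 0\<^sub>v N"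
    then show "(1\<^sub>m N - iteration) *\<^sub>v x = 0\<^sub>v N" using M1_kernel[OF M2y] M2_kernel[OF y] by blast
  qed (simp add: mult_mat_zero_vec[OF M1_carrier] mult_mat_zero_vec[OF M2_carrier])
  also have "\<dots> \<longleftrightarrow> (A1 + A2) *\<^sub>v x = 0\<^sub>v N"
    unfolding shifts_mult_one_minus_iteration[OF x] using alpha_pos x sum_carrier
    by (intro smult_vec_eq_0_iff) auto
  finally show ?thesis .
qed

lemma transpose_A1_on_kernel:
  assumes z: "z \<in> carrier_vec N" and null: "(A1 + A2) *\<^sub>v z = 0\<^sub>v N"
  shows "transpose_mat A1 *\<^sub>v z = A2 *\<^sub>v z"
proof -
  have sum: "A1 *\<^sub>v z + A2 *\<^sub>v z = 0\<^sub>v N"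
    using null z A1_carrier A2_carrier by (simp add: add_mult_distrib_mat_vec[of _ N N])
  have "0 = z \<bullet> (A1 *\<^sub>v z + A2 *\<^sub>v z)" using sum z by simp
  also have "\<dots> = z \<bullet> (A1 *\<^sub>v z)"
    using z A1_carrier A2_carrier scalar_prod_skew_eq_0[OF A2_carrier A2_skew z]
    by (simp add: scalar_prod_add_distrib[of z N])
  finally have "transpose_mat A1 *\<^sub>v z = - (A1 *\<^sub>v z)" using A1_form_eq_0[OF z] by simp
  also have "\<dots> = A2 *\<^sub>v z"
    using minus_unique_vec[OF _ _ sum] z A1_carrier A2_carrier by simp
  finally show ?thesis .
qed

lemma transpose_sum_on_kernel:
  assumes z: "z \<in> carrier_vec N" and null: "(A1 + A2) *\<^sub>v z = 0\<^sub>v N"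
  shows "transpose_mat (A1 + A2) *\<^sub>v z = 0\<^sub>v N"
proof -
  have "transpose_mat (A1 + A2) *\<^sub>v z = transpose_mat A1 *\<^sub>v z + transpose_mat A2 *\<^sub>v z"
    using z A1_carrier A2_carrier by (simp add: transpose_add add_mult_distrib_mat_vec[of _ N N])
  also have "\<dots> = A2 *\<^sub>v z - A2 *\<^sub>v z"
    unfolding transpose_A1_on_kernel[OF z null] A2_skew using z A2_carrier by auto
  also have "\<dots> = 0\<^sub>v N"
    using z A2_carrier by simp
  finally show ?thesis .
qed

lemma kernel_square_one_minus_iteration:
  assumes x: "x \<in> carrier_vec N"
    and square: "(1\<^sub>m N - iteration) *\<^sub>v ((1\<^sub>m N - iteration) *\<^sub>v x) = 0\<^sub>v N"
  shows "(1\<^sub>m N - iteration) *\<^sub>v x = 0\<^sub>v N"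
proof -
  define z where "z = (1\<^sub>m N - iteration) *\<^sub>v x"
  define u where "u = M2 *\<^sub>v z"
  have z: "z \<in> carrier_vec N" and u: "u \<in> carrier_vec N"
    unfolding z_def u_def using x one_minus_iteration_carrier M2_carrier by auto
  have null: "(A1 + A2) *\<^sub>v z = 0\<^sub>v N"
    using kernel_one_minus_iteration[OF z] square unfolding z_def by simp
  have u_eq: "u = \<alpha> \<cdot>\<^sub>v z + A2 *\<^sub>v z"
    unfolding u_def by (rule shift_mult_vec(1)[OF A2_carrier z])
  have "u \<bullet> u = \<alpha> * (z \<bullet> u) + (A2 *\<^sub>v z) \<bullet> u"
    unfolding u_eq using z u A2_carrier by (simp add: add_scalar_prod_distrib[of _ N])
  also have "(A2 *\<^sub>v z) \<bullet> u = z \<bullet> (A1 *\<^sub>v u)"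
    using transpose_vec_mult_scalar[OF A1_carrier u z] transpose_A1_on_kernel[OF z null] by simp
  also have "\<alpha> * (z \<bullet> u) + z \<bullet> (A1 *\<^sub>v u) = z \<bullet> (M1 *\<^sub>v u)"
    using z u A1_carrier by (simp add: shift_mult_vec scalar_prod_add_distrib[of z N])
  also have "\<dots> = 2 * \<alpha> * (z \<bullet> ((A1 + A2) *\<^sub>v x))"
    using shifts_mult_one_minus_iteration[OF x, folded z_def u_def] x z sum_carrier by simp
  also have "z \<bullet> ((A1 + A2) *\<^sub>v x) = 0"
    using transpose_vec_mult_scalar[OF sum_carrier x z] transpose_sum_on_kernel[OF z null] x by simp
  finally have "u = 0\<^sub>v N" using self_scalar_prod_eq_0_iff[OF u] by simp
  then show ?thesis using M2_kernel[OF z] unfolding u_def z_def by simp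
qed

lemma mat_index_one_minus_iteration:
  assumes "v \<in> carrier_vec N" "v \<noteq> 0\<^sub>v N" "(A1 + A2) *\<^sub>v v = 0\<^sub>v N"
  shows "mat_index (1\<^sub>m N - iteration) = 1"
  using one_minus_iteration_carrier assms kernel_one_minus_iteration kernel_square_one_minus_iteration
  by (intro mat_index_eq_1I) blast+

end

lemma calA1_index:
  assumes "A \<in> carrier_mat n n" "B \<in> carrier_mat m n" "i < n + m + l" "j < n + m + l"
  shows "calA1 n m l A B $$ (i, j) =
    (if i < n \<and> j < n then A $$ (i, j)
     else if i < n \<and> j < n + m then B $$ (j - n, i)
     else if n \<le> i \<and> i < n + m \<and> j < n then - B $$ (i - n, j)
     else 0)"
  using assms unfolding calA1_def block3_def append_cols_def
  by (auto simp: index_mat_four_block append_rows_def)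

lemma calA2_index:
  assumes "C \<in> carrier_mat l m" "i < n + m + l" "j < n + m + l"
  shows "calA2 n m l C $$ (i, j) =
    (if n \<le> i \<and> i < n + m \<and> n + m \<le> j then - C $$ (j - n - m, i - n)
     else if n + m \<le> i \<and> n \<le> j \<and> j < n + m then C $$ (i - n - m, j - n)
     else 0)"
  using assms unfolding calA2_def block3_def append_cols_def
  by (auto simp: index_mat_four_block append_rows_def)

lemma calA_index:
  assumes "A \<in> carrier_mat n n" "B \<in> carrier_mat m n" "C \<in> carrier_mat l m"
    "i < n + m + l" "j < n + m + l"
  shows "calA n m l A B C $$ (i, j) = calA1 n m l A B $$ (i, j) + calA2 n m l C $$ (i, j)"
  using assms unfolding calA_def calA1_def calA2_def block3_def append_cols_def
  by (auto simp: index_mat_four_block append_rows_def)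

lemma calA1_carrier: "A \<in> carrier_mat n n \<Longrightarrow> calA1 n m l A B \<in> carrier_mat (n + m + l) (n + m + l)"
  unfolding calA1_def block3_def append_cols_def by (auto simp: append_rows_def)

lemma calA2_carrier: "calA2 n m l C \<in> carrier_mat (n + m + l) (n + m + l)"
  unfolding calA2_def block3_def append_cols_def by (auto simp: append_rows_def)

lemma calA_carrier: "A \<in> carrier_mat n n \<Longrightarrow> calA n m l A B C \<in> carrier_mat (n + m + l) (n + m + l)"
  unfolding calA_def block3_def append_cols_def by (auto simp: append_rows_def)

lemma calA_eq_calA1_plus_calA2:
  assumes "A \<in> carrier_mat n n" "B \<in> carrier_mat m n" "C \<in> carrier_mat l m"
  shows "calA n m l A B C = calA1 n m l A B + calA2 n m l C"
  using calA_carrier[OF assms(1), of m l B C] calA2_carrier[of n m l C]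
  by (intro eq_matI) (auto simp: calA_index[OF assms])

lemma transpose_calA2:
  assumes "C \<in> carrier_mat l m"
  shows "transpose_mat (calA2 n m l C) = - calA2 n m l C"
  using calA2_carrier[of n m l C] by (intro eq_matI) (auto simp: calA2_index[OF assms])

lemma calA1_plus_transpose:
  assumes A: "A \<in> carrier_mat n n" "transpose_mat A = A" and B: "B \<in> carrier_mat m n"
  shows "calA1 n m l A B + transpose_mat (calA1 n m l A B) =
    four_block_mat (2 \<cdot>\<^sub>m A) (0\<^sub>m n (m + l)) (0\<^sub>m (m + l) n) (0\<^sub>m (m + l) (m + l))"
proof -
  have sym: "A $$ (j, i) = A $$ (i, j)" if "i < n" "j < n" for i j
    using arg_cong[OF A(2), of "\<lambda>M. M $$ (i, j)"] that A(1) by simp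
  have K: "calA1 n m l A B \<in> carrier_mat (n + m + l) (n + m + l)" by (rule calA1_carrier[OF A(1)])
  show ?thesis (is "?L = ?R")
  proof (rule eq_matI)
    fix i j assume "i < dim_row ?R" "j < dim_col ?R"
    then have "i < n + m + l" "j < n + m + l" using A(1) by auto
    then show "?L $$ (i, j) = ?R $$ (i, j)"
      using K A(1) by (auto simp: calA1_index[OF A(1) B] sym)
  qed (use K A(1) in auto)
qed

lemma calA1_symmetric_part_mult_vec:
  assumes A: "A \<in> carrier_mat n n" "transpose_mat A = A" and B: "B \<in> carrier_mat m n"
    and x: "x \<in> carrier_vec (n + m + l)"
  shows "(calA1 n m l A B + transpose_mat (calA1 n m l A B)) *\<^sub>v x
    = ((2 \<cdot>\<^sub>m A) *\<^sub>v vec_first x n) @\<^sub>v 0\<^sub>v (m + l)"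
proof -
  have x': "x \<in> carrier_vec (n + (m + l))" using x by (simp add: add.assoc)
  have "x = vec_first x n @\<^sub>v vec_last x (m + l)" using vec_first_last_append[OF x'] by simp
  then have "(calA1 n m l A B + transpose_mat (calA1 n m l A B)) *\<^sub>v x
      = ((2 \<cdot>\<^sub>m A) *\<^sub>v vec_first x n) @\<^sub>v (0\<^sub>m (m + l) (m + l) *\<^sub>v vec_last x (m + l))"
    unfolding calA1_plus_transpose[OF A B] using A(1)
    by (metis mult_mat_vec_split smult_carrier_mat vec_first_carrier vec_last_carrier zero_carrier_mat)
  moreover have "0\<^sub>m (m + l) (m + l) *\<^sub>v vec_last x (m + l) = 0\<^sub>v (m + l)"
    by (intro eq_vecI) auto
  ultimately show ?thesis by simp
qed

lemma calA1_form:
  assumes A: "A \<in> carrier_mat n n" "transpose_mat A = A" and B: "B \<in> carrier_mat m n"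
    and x: "x \<in> carrier_vec (n + m + l)"
  shows "x \<bullet> (calA1 n m l A B *\<^sub>v x) = vec_first x n \<bullet> (A *\<^sub>v vec_first x n)"
proof -
  have x': "x \<in> carrier_vec (n + (m + l))" using x by (simp add: add.assoc)
  have "2 * (x \<bullet> (calA1 n m l A B *\<^sub>v x))
      = x \<bullet> ((calA1 n m l A B + transpose_mat (calA1 n m l A B)) *\<^sub>v x)"
    using scalar_prod_plus_transpose[OF calA1_carrier[OF A(1)] x] by simp
  also have "\<dots> = (vec_first x n @\<^sub>v vec_last x (m + l)) \<bullet> (((2 \<cdot>\<^sub>m A) *\<^sub>v vec_first x n) @\<^sub>v 0\<^sub>v (m + l))"
    unfolding calA1_symmetric_part_mult_vec[OF A B x] using vec_first_last_append[OF x'] by simp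
  also have "\<dots> = 2 * (vec_first x n \<bullet> (A *\<^sub>v vec_first x n))"
    using A(1) by (simp add: scalar_prod_append[of _ n _ "m + l"] smult_mat_mult_mat_vec[of _ n n])
  finally show ?thesis by simp
qed

lemma sym_pos_form_eq_0_iff:
  assumes "sym_pos_def n A" "u \<in> carrier_vec n"
  shows "u \<bullet> (A *\<^sub>v u) = 0 \<longleftrightarrow> u = 0\<^sub>v n"
  using assms mult_mat_zero_vec[of A n n] unfolding sym_pos_def_def by force

lemma sym_pos_form_nonneg:
  assumes "sym_pos_def n A" "u \<in> carrier_vec n"
  shows "0 \<le> u \<bullet> (A *\<^sub>v u)"
  using assms sym_pos_form_eq_0_iff[OF assms] unfolding sym_pos_def_def
  by (metis order.strict_implies_order order_refl)

lemma calA1_form_nonneg: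
  assumes "sym_pos_def n A" "B \<in> carrier_mat m n" "x \<in> carrier_vec (n + m + l)"
  shows "0 \<le> x \<bullet> (calA1 n m l A B *\<^sub>v x)"
  using assms calA1_form[of A n B m x l] sym_pos_form_nonneg[OF assms(1)]
  unfolding sym_pos_def_def by simp

lemma transpose_calA1_on_isotropic:
  assumes SP: "sym_pos_def n A" and B: "B \<in> carrier_mat m n" and x: "x \<in> carrier_vec (n + m + l)"
    and isotropic: "x \<bullet> (calA1 n m l A B *\<^sub>v x) = 0"
  shows "transpose_mat (calA1 n m l A B) *\<^sub>v x = - (calA1 n m l A B *\<^sub>v x)"
proof -
  have A: "A \<in> carrier_mat n n" "transpose_mat A = A" using SP unfolding sym_pos_def_def by auto
  have K: "calA1 n m l A B \<in> carrier_mat (n + m + l) (n + m + l)" by (rule calA1_carrier[OF A(1)])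
  have "vec_first x n = 0\<^sub>v n"
    using isotropic calA1_form[OF A B x] sym_pos_form_eq_0_iff[OF SP] by simp
  then have "(calA1 n m l A B + transpose_mat (calA1 n m l A B)) *\<^sub>v x = 0\<^sub>v (n + m + l)"
    unfolding calA1_symmetric_part_mult_vec[OF A B x] using A(1) by (intro eq_vecI) auto
  then have sum: "calA1 n m l A B *\<^sub>v x + transpose_mat (calA1 n m l A B) *\<^sub>v x = 0\<^sub>v (n + m + l)"
    using K x by (simp add: add_mult_distrib_mat_vec[of _ "n + m + l" "n + m + l"])
  from minus_unique_vec[OF _ _ this] show ?thesis using K x by simp
qed

theorem mainTheorem1:
  fixes n m l :: nat and A B C :: "real mat" and \<alpha> :: real
  assumes "n > 0" and "m > 0" and "l > 0"
    and "sym_pos_def n A"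
    and "B \<in> carrier_mat m n"
    and "C \<in> carrier_mat l m"
    and "\<not> invertible_mat (calA n m l A B C)"
    and "\<alpha> > 0"
  shows "mat_index (1\<^sub>m (n + m + l) - T_apss n m l A B C \<alpha>) = 1"
proof -
  have A: "A \<in> carrier_mat n n" using assms(4) unfolding sym_pos_def_def by simp
  interpret apss_splitting "n + m + l" "calA1 n m l A B" "calA2 n m l C" \<alpha>
    using calA1_carrier[OF A] calA2_carrier assms(8) calA1_form_nonneg[OF assms(4,5)]
      transpose_calA1_on_isotropic[OF assms(4,5)] transpose_calA2[OF assms(6)]
    by unfold_locales auto
  obtain v where "v \<in> carrier_vec (n + m + l)" "v \<noteq> 0\<^sub>v (n + m + l)"
    "(calA1 n m l A B + calA2 n m l C) *\<^sub>v v = 0\<^sub>v (n + m + l)"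
    using not_invertible_mat_kernel[OF calA_carrier[OF A] assms(7)]
    unfolding calA_eq_calA1_plus_calA2[OF A assms(5,6)] .
  then have "mat_index (1\<^sub>m (n + m + l) - iteration) = 1"
    by (rule mat_index_one_minus_iteration)
  then show ?thesis unfolding T_apss_def iteration_def Let_def .
qed

end
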